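(* Let $v$ be a weight on $[0,1)$. For each $t\in[0,1)$ the operator $C_t\colon H^\infty_v\to H^\infty_v$ is continuous. Moreover, $\|C_0\|_{H^\infty_v\to H^\infty_v}=1$ and $$1\le \|C_t\|_{H^\infty_v\to H^\infty_v}\le -\frac{\log(1-t)}{t},\qquad t\in(0,1).$$
   Context: $\mathbb{D}=\{z\in\mathbb{C}:|z|<1\}$ and $H(\mathbb{D})$ is the space of holomorphic functions on $\mathbb{D}$. A weight is a continuous non-increasing function $v\colon[0,1)\to(0,\infty)$, extended to $\mathbb{D}$ by $v(z):=v(|z|)$. $H^\infty_v=\{f\in H(\mathbb{D}):\|f\|_{\infty,v}:=\sup_{z\in\mathbb{D}}|f(z)|v(z)<\infty\}$ with norm $\|\cdot\|_{\infty,v}$. For $t\in[0,1]$ the generalized Cesàro operator $C_t$ is defined on $f\in H(\mathbb{D})$ by $C_tf(0)=f(0)$ and $C_tf(z)=\frac{1}{z}\int_0^z\frac{f(\xi)}{1-t\xi}\,d\xi$ for $z\in\mathbb{D}\setminus\{0\}$. *)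

theory Defs
  imports "HOL-Complex_Analysis.Complex_Analysis"
begin

definition is_weight :: "(real \<Rightarrow> real) \<Rightarrow> bool" where
  "is_weight v \<longleftrightarrow> continuous_on {0..<1} v \<and> (\<forall>r\<in>{0..<1}. v r > 0)
     \<and> (\<forall>r s. 0 \<le> r \<longrightarrow> r \<le> s \<longrightarrow> s < 1 \<longrightarrow> v s \<le> v r)"

definition vnorm :: "(real \<Rightarrow> real) \<Rightarrow> (complex \<Rightarrow> complex) \<Rightarrow> real" where
  "vnorm v f = (SUP z\<in>ball 0 1. norm (f z) * v (norm z))"

definition Hv :: "(real \<Rightarrow> real) \<Rightarrow> (complex \<Rightarrow> complex) set" where
  "Hv v = {f. f holomorphic_on ball 0 1 \<and>
              bdd_above ((\<lambda>z. norm (f z) * v (norm z)) ` ball 0 1)}"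

definition cesaro :: "real \<Rightarrow> (complex \<Rightarrow> complex) \<Rightarrow> complex \<Rightarrow> complex" where
  "cesaro t f z = (if z = 0 then f 0
     else (1 / z) * contour_integral (linepath 0 z) (\<lambda>\<xi>. f \<xi> / (1 - complex_of_real t * \<xi>)))"

definition opnorm_v :: "(real \<Rightarrow> real) \<Rightarrow> ((complex \<Rightarrow> complex) \<Rightarrow> (complex \<Rightarrow> complex)) \<Rightarrow> real" where
  "opnorm_v v T = Sup {vnorm v (T f) | f. f \<in> Hv v \<and> vnorm v f \<le> 1}"

end

theory Submission
  imports Defs
begin

text \<open>Substituting \<open>\<xi> = s z\<close> gives \<open>C\<^sub>t f(z) = \<integral>\<^sub>0\<^sup>1 f(sz) / (1 - tsz) ds\<close>.
  Since \<open>v\<close> is non-increasing, \<open>|f(sz)| v(|z|) \<le> \<parallel>f\<parallel>\<^sub>v\<close>, and \<open>|1 - tsz| \<ge> 1 - ts\<close>; hence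
  \<open>|C\<^sub>t f(z)| v(|z|) \<le> \<parallel>f\<parallel>\<^sub>v \<integral>\<^sub>0\<^sup>1 ds / (1 - ts) = -\<parallel>f\<parallel>\<^sub>v log(1 - t) / t\<close>,
  which by linearity also gives continuity. Conversely \<open>C\<^sub>t f(0) = f(0)\<close>, so the constant
  \<open>1 / v(0)\<close>, which has norm 1, is mapped to a function of norm at least 1.\<close>

definition cesaro_norm_bound :: "real \<Rightarrow> real" where
  "cesaro_norm_bound t = (if t = 0 then 1 else - ln (1 - t) / t)"

lemma cesaro_norm_bound_has_integral:
  assumes "t < 1"
  shows "((\<lambda>s. 1 / (1 - t * s)) has_integral cesaro_norm_bound t) {0..1}"
proof (cases "t = 0")
  case True
  then show ?thesis
    using has_integral_const_real[of "1::real" 0 1] by (simp add: cesaro_norm_bound_def)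
next
  case False
  have "((\<lambda>s. - ln (1 - t * s) / t) has_vector_derivative 1 / (1 - t * s)) (at s within {0..1})"
    if "s \<in> {0..1}" for s
  proof -
    have "t * s < 1"
      using assms that mult_left_le[of s t] mult_nonneg_nonneg[of "-t" s] by (cases "t \<ge> 0") auto
    then show ?thesis
      using False
      by (auto intro!: derivative_eq_intros
          simp: has_real_derivative_iff_has_vector_derivative[symmetric] field_simps)
  qed
  then have "((\<lambda>s. 1 / (1 - t * s)) has_integral (- ln (1 - t * 1) / t - - ln (1 - t * 0) / t)) {0..1}"
    by (intro fundamental_theorem_of_calculus) auto
  then show ?thesis
    using False by (simp add: cesaro_norm_bound_def)
qed

lemma cesaro_norm_bound_pos:
  assumes "t < 1"
  shows "cesaro_norm_bound t > 0"
proof (cases t "0::real" rule: linorder_cases)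
  case less
  then have "ln (1 - t) > 0" by simp
  with less show ?thesis by (simp add: cesaro_norm_bound_def divide_pos_neg)
next
  case greater
  then have "ln (1 - t) < 0" using assms by simp
  with greater show ?thesis by (simp add: cesaro_norm_bound_def divide_neg_pos)
qed (simp add: cesaro_norm_bound_def)

lemma is_weight_pos: "is_weight v \<Longrightarrow> 0 \<le> r \<Longrightarrow> r < 1 \<Longrightarrow> v r > 0"
  unfolding is_weight_def by simp

lemma is_weight_antimono: "is_weight v \<Longrightarrow> 0 \<le> r \<Longrightarrow> r \<le> s \<Longrightarrow> s < 1 \<Longrightarrow> v s \<le> v r"
  unfolding is_weight_def by blast

lemma vnorm_ge:
  assumes "f \<in> Hv v" "z \<in> ball 0 1"
  shows "norm (f z) * v (norm z) \<le> vnorm v f"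
  using assms unfolding Hv_def vnorm_def by (auto intro: cSUP_upper)

lemma vnorm_le:
  assumes "\<And>z. z \<in> ball 0 1 \<Longrightarrow> norm (f z) * v (norm z) \<le> B"
  shows "vnorm v f \<le> B"
  unfolding vnorm_def by (rule cSUP_least) (use assms in auto)

lemma Hv_norm_mult_weight_le:
  assumes "is_weight v" "f \<in> Hv v" "norm w \<le> r" "r < 1"
  shows "norm (f w) * v r \<le> vnorm v f"
proof -
  have "norm (f w) * v r \<le> norm (f w) * v (norm w)"
    using assms by (auto intro!: mult_left_mono is_weight_antimono[of v])
  also have "\<dots> \<le> vnorm v f"
    using assms by (intro vnorm_ge) auto
  finally show ?thesis .
qed

lemma Hv_const:
  assumes "is_weight v"
  shows "(\<lambda>z. c) \<in> Hv v"
proof -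
  have "norm c * v (norm z) \<le> norm c * v 0" if "z \<in> ball 0 1" for z
    using assms that by (auto intro!: mult_left_mono is_weight_antimono[of v])
  then show ?thesis
    unfolding Hv_def by (auto intro!: bdd_aboveI2[where M = "norm c * v 0"])
qed

lemma vnorm_const:
  assumes "is_weight v"
  shows "vnorm v (\<lambda>z. c) = norm c * v 0"
proof (rule antisym)
  show "vnorm v (\<lambda>z. c) \<le> norm c * v 0"
    using assms by (auto intro!: vnorm_le mult_left_mono is_weight_antimono[of v])
  show "norm c * v 0 \<le> vnorm v (\<lambda>z. c)"
    using vnorm_ge[OF Hv_const[OF assms], of 0] by simp
qed

lemma Hv_diff:
  assumes "is_weight v" "f \<in> Hv v" "g \<in> Hv v"
  shows "(\<lambda>z. f z - g z) \<in> Hv v"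
proof -
  have "norm (f z - g z) * v (norm z) \<le> vnorm v f + vnorm v g" if "z \<in> ball 0 1" for z
  proof -
    have "norm (f z - g z) * v (norm z) \<le> (norm (f z) + norm (g z)) * v (norm z)"
      using assms that is_weight_pos[of v "norm z"] by (intro mult_right_mono norm_triangle_ineq4) auto
    also have "\<dots> = norm (f z) * v (norm z) + norm (g z) * v (norm z)"
      by (rule distrib_right)
    also have "\<dots> \<le> vnorm v f + vnorm v g"
      using assms that by (intro add_mono vnorm_ge) auto
    finally show ?thesis .
  qed
  then show ?thesis
    using assms unfolding Hv_def
    by (auto intro!: holomorphic_intros bdd_aboveI2[where M = "vnorm v f + vnorm v g"])
qed

lemma opnorm_v_set_le:
  assumes "0 \<le> C" "\<And>f. f \<in> Hv v \<Longrightarrow> vnorm v (T f) \<le> C * vnorm v f"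
    and "x \<in> {vnorm v (T f) | f. f \<in> Hv v \<and> vnorm v f \<le> 1}"
  shows "x \<le> C"
proof -
  obtain f where f: "f \<in> Hv v" "vnorm v f \<le> 1" and x: "x = vnorm v (T f)"
    using assms(3) by blast
  have "x \<le> C * vnorm v f" using x assms(2)[OF f(1)] by simp
  also have "\<dots> \<le> C" using f(2) assms(1) by (rule mult_left_le)
  finally show ?thesis .
qed

lemma opnorm_v_le:
  assumes "is_weight v" "0 \<le> C" "\<And>f. f \<in> Hv v \<Longrightarrow> vnorm v (T f) \<le> C * vnorm v f"
  shows "opnorm_v v T \<le> C"
  unfolding opnorm_v_def
proof (rule cSup_least)
  show "{vnorm v (T f) | f. f \<in> Hv v \<and> vnorm v f \<le> 1} \<noteq> {}"
    using Hv_const[OF assms(1), of 0] vnorm_const[OF assms(1), of 0] by force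
qed (use assms(2,3) opnorm_v_set_le in blast)

lemma vnorm_le_opnorm_v:
  assumes "0 \<le> C" "\<And>f. f \<in> Hv v \<Longrightarrow> vnorm v (T f) \<le> C * vnorm v f"
    and "f \<in> Hv v" "vnorm v f \<le> 1"
  shows "vnorm v (T f) \<le> opnorm_v v T"
  unfolding opnorm_v_def
proof (rule cSup_upper)
  show "bdd_above {vnorm v (T f) | f. f \<in> Hv v \<and> vnorm v f \<le> 1}"
    by (intro bdd_aboveI[where M = C]) (rule opnorm_v_set_le[OF assms(1,2)])
qed (use assms(3,4) in blast)

lemma one_le_opnorm_v:
  assumes "is_weight v" "0 \<le> C" "\<And>f. f \<in> Hv v \<Longrightarrow> vnorm v (T f) \<le> C * vnorm v f"
    and "\<And>f. f \<in> Hv v \<Longrightarrow> T f \<in> Hv v" "\<And>f. T f 0 = f 0"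
  shows "1 \<le> opnorm_v v T"
proof -
  define c where "c = complex_of_real (1 / v 0)"
  have v0: "v 0 > 0" using assms(1) by (rule is_weight_pos) auto
  have c: "(\<lambda>z. c) \<in> Hv v" "vnorm v (\<lambda>z. c) \<le> 1"
    using Hv_const[OF assms(1)] vnorm_const[OF assms(1)] v0 by (auto simp: c_def norm_divide)
  have "1 = norm (T (\<lambda>z. c) 0) * v (norm (0::complex))"
    using assms(5) v0 by (simp add: c_def norm_divide)
  also have "\<dots> \<le> vnorm v (T (\<lambda>z. c))"
    using assms(4)[OF c(1)] by (rule vnorm_ge) simp
  also have "\<dots> \<le> opnorm_v v T"
    using assms(2,3) c by (rule vnorm_le_opnorm_v)
  finally show ?thesis .
qed

lemma cesaro_eq_cesaro_0: "cesaro t f = cesaro 0 (\<lambda>\<xi>. f \<xi> / (1 - complex_of_real t * \<xi>))"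
  by (simp add: cesaro_def fun_eq_iff)

lemma cesaro_0_holomorphic:
  assumes "g holomorphic_on ball 0 r"
  shows "cesaro 0 g holomorphic_on ball 0 r"
proof (cases "r > 0")
  case True
  \<comment> \<open>\<open>cesaro 0 g\<close> is the difference quotient at 0 of a primitive of \<open>g\<close>.\<close>
  obtain G where G: "\<And>x. x \<in> ball 0 r \<Longrightarrow> (G has_field_derivative g x) (at x within ball 0 r)"
    using holomorphic_convex_primitive'[OF convex_ball open_ball assms] by metis
  have G_at: "(G has_field_derivative g x) (at x)" if "x \<in> ball 0 r" for x
    using G[OF that] at_within_open[OF that open_ball] by simp
  then have "G holomorphic_on ball 0 r"
    using holomorphic_on_open[OF open_ball] by blast
  then have "(\<lambda>z. if z = 0 then deriv G 0 else (G z - G 0) / (z - 0)) holomorphic_on ball 0 r"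
    by (rule pole_lemma) (simp add: True)
  moreover have "(if z = 0 then deriv G 0 else (G z - G 0) / (z - 0)) = cesaro 0 g z"
    if z: "z \<in> ball 0 r" for z
  proof (cases "z = 0")
    case True
    then show ?thesis
      using DERIV_imp_deriv[OF G_at, of 0] \<open>r > 0\<close> by (simp add: cesaro_def)
  next
    case False
    have "closed_segment 0 z \<subseteq> ball 0 r"
      using z \<open>r > 0\<close> by (intro closed_segment_subset convex_ball) auto
    then have "(g has_contour_integral (G z - G 0)) (linepath 0 z)"
      using contour_integral_primitive[OF G valid_path_linepath[of 0 z]] by simp
    with False show ?thesis
      by (simp add: cesaro_def contour_integral_unique)
  qed
  ultimately show ?thesis
    by (rule holomorphic_transform)
qed (simp add: ball_empty holomorphic_on_empty)

lemma cesaro_0_has_integral: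
  assumes "g holomorphic_on ball 0 r" "z \<in> ball 0 r"
  shows "((\<lambda>s. g (s *\<^sub>R z)) has_integral cesaro 0 g z) {0..1}"
proof (cases "z = 0")
  case True
  then show ?thesis
    using has_integral_const_real[of "g 0" 0 1] by (simp add: cesaro_def)
next
  case False
  have "closed_segment 0 z \<subseteq> ball 0 r"
    using assms(2)
    by (intro closed_segment_subset convex_ball) (auto intro: le_less_trans[OF norm_ge_zero])
  then have "g contour_integrable_on linepath 0 z"
    by (intro contour_integrable_holomorphic_simple[OF assms(1) open_ball]) auto
  then have "(g has_contour_integral contour_integral (linepath 0 z) g) (linepath 0 z)"
    by (rule has_contour_integral_integral)
  then have "((\<lambda>s. g (linepath 0 z s) * z) has_integral contour_integral (linepath 0 z) g) {0..1}"
    by (simp add: has_contour_integral_linepath)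
  then have "((\<lambda>s. g (linepath 0 z s) * z / z) has_integral contour_integral (linepath 0 z) g / z)
      {0..1}"
    by (rule has_integral_divide)
  with False show ?thesis
    by (simp add: cesaro_def linepath_def)
qed

lemma cesaro_0_diff:
  assumes "f holomorphic_on ball 0 r" "g holomorphic_on ball 0 r" "z \<in> ball 0 r"
  shows "cesaro 0 (\<lambda>\<xi>. f \<xi> - g \<xi>) z = cesaro 0 f z - cesaro 0 g z"
proof -
  have "((\<lambda>s. f (s *\<^sub>R z) - g (s *\<^sub>R z)) has_integral cesaro 0 (\<lambda>\<xi>. f \<xi> - g \<xi>) z) {0..1}"
    using assms by (intro cesaro_0_has_integral holomorphic_intros) auto
  moreover have "((\<lambda>s. f (s *\<^sub>R z) - g (s *\<^sub>R z)) has_integral cesaro 0 f z - cesaro 0 g z) {0..1}"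
    using assms by (intro has_integral_diff cesaro_0_has_integral)
  ultimately show ?thesis
    by (rule has_integral_unique)
qed

lemma holomorphic_on_div_one_minus:
  assumes "f holomorphic_on ball 0 1" "\<bar>t\<bar> \<le> 1"
  shows "(\<lambda>\<xi>. f \<xi> / (1 - complex_of_real t * \<xi>)) holomorphic_on ball 0 1"
proof -
  have "1 - complex_of_real t * \<xi> \<noteq> 0" if "\<xi> \<in> ball 0 1" for \<xi>
  proof -
    have "norm (complex_of_real t * \<xi>) < 1"
      using assms(2) that mult_left_le_one_le[of "norm \<xi>" "\<bar>t\<bar>"] by (simp add: norm_mult)
    then show ?thesis
      by (metis norm_one less_irrefl right_minus_eq)
  qed
  with assms(1) show ?thesis
    by (intro holomorphic_intros) auto
qed

lemma cesaro_holomorphic: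
  "f holomorphic_on ball 0 1 \<Longrightarrow> \<bar>t\<bar> \<le> 1 \<Longrightarrow> cesaro t f holomorphic_on ball 0 1"
  by (subst cesaro_eq_cesaro_0) (intro cesaro_0_holomorphic holomorphic_on_div_one_minus)

lemma cesaro_diff:
  assumes "f holomorphic_on ball 0 1" "g holomorphic_on ball 0 1" "\<bar>t\<bar> \<le> 1" "z \<in> ball 0 1"
  shows "cesaro t (\<lambda>\<xi>. f \<xi> - g \<xi>) z = cesaro t f z - cesaro t g z"
  using cesaro_0_diff[OF holomorphic_on_div_one_minus[OF assms(1,3)]
      holomorphic_on_div_one_minus[OF assms(2,3)] assms(4)]
  by (simp add: cesaro_eq_cesaro_0[of t] diff_divide_distrib)

lemma norm_cesaro_mult_weight_le:
  assumes "is_weight v" "f \<in> Hv v" "0 \<le> t" "t < 1" "z \<in> ball 0 1"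
  shows "norm (cesaro t f z) * v (norm z) \<le> cesaro_norm_bound t * vnorm v f"
proof -
  define M where "M = vnorm v f / v (norm z)"
  have vz: "v (norm z) > 0"
    using assms(1,5) by (intro is_weight_pos) auto
  have f_holo: "f holomorphic_on ball 0 1"
    using assms(2) by (simp add: Hv_def)
  have integral_eq:
    "((\<lambda>s. f (s *\<^sub>R z) / (1 - complex_of_real t * (s *\<^sub>R z))) has_integral cesaro t f z) {0..1}"
    using cesaro_0_has_integral[OF holomorphic_on_div_one_minus[OF f_holo] assms(5)] assms(3,4)
    by (simp add: cesaro_eq_cesaro_0[of t])
  have majorant: "((\<lambda>s. M * (1 / (1 - t * s))) has_integral M * cesaro_norm_bound t) {0..1}"
    using cesaro_norm_bound_has_integral[OF assms(4)] by (rule has_integral_mult_right)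
  have "norm (f (s *\<^sub>R z) / (1 - complex_of_real t * (s *\<^sub>R z))) \<le> M * (1 / (1 - t * s))"
    if s: "s \<in> {0..1}" for s
  proof -
    have sz: "norm (s *\<^sub>R z) \<le> norm z"
      using s by (simp add: mult_left_le_one_le)
    have "norm (f (s *\<^sub>R z)) * v (norm z) \<le> vnorm v f"
      using assms(1,2,5) sz by (intro Hv_norm_mult_weight_le) auto
    then have num: "norm (f (s *\<^sub>R z)) \<le> M"
      using vz by (simp add: M_def pos_le_divide_eq)
    have "norm (complex_of_real t * (s *\<^sub>R z)) \<le> t * s"
      using s assms(3,5) mult_left_le[of "norm z" "t * s"] by (simp add: norm_mult mult_ac)
    then have den: "1 - t * s \<le> norm (1 - complex_of_real t * (s *\<^sub>R z))"
      using norm_triangle_ineq2[of 1 "complex_of_real t * (s *\<^sub>R z)"] by simp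
    have "0 < 1 - t * s"
      using s assms(4) mult_left_le[of s t] assms(3) by simp
    then have "norm (f (s *\<^sub>R z)) / norm (1 - complex_of_real t * (s *\<^sub>R z)) \<le> M / (1 - t * s)"
      using num den order_trans[OF norm_ge_zero num] by (intro frac_le) auto
    then show ?thesis
      by (simp add: norm_divide)
  qed
  then have "norm (integral {0..1} (\<lambda>s. f (s *\<^sub>R z) / (1 - complex_of_real t * (s *\<^sub>R z))))
      \<le> integral {0..1} (\<lambda>s. M * (1 / (1 - t * s)))"
    using integral_eq majorant by (intro integral_norm_bound_integral) auto
  then have "norm (cesaro t f z) \<le> M * cesaro_norm_bound t"
    using integral_eq majorant by (simp add: integral_unique)
  with vz show ?thesis
    by (simp add: M_def field_simps)
qed

lemma cesaro_Hv:
  assumes "is_weight v" "f \<in> Hv v" "0 \<le> t" "t < 1"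
  shows "cesaro t f \<in> Hv v"
proof -
  have "cesaro t f holomorphic_on ball 0 1"
    using assms by (intro cesaro_holomorphic) (auto simp: Hv_def)
  moreover have "bdd_above ((\<lambda>z. norm (cesaro t f z) * v (norm z)) ` ball 0 1)"
    using norm_cesaro_mult_weight_le[OF assms]
    by (auto intro!: bdd_aboveI2[where M = "cesaro_norm_bound t * vnorm v f"])
  ultimately show ?thesis
    by (simp add: Hv_def)
qed

lemma vnorm_cesaro_le:
  "is_weight v \<Longrightarrow> f \<in> Hv v \<Longrightarrow> 0 \<le> t \<Longrightarrow> t < 1 \<Longrightarrow>
    vnorm v (cesaro t f) \<le> cesaro_norm_bound t * vnorm v f"
  by (intro vnorm_le norm_cesaro_mult_weight_le)

lemma vnorm_cesaro_diff_le:
  assumes "is_weight v" "f \<in> Hv v" "g \<in> Hv v" "0 \<le> t" "t < 1"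
  shows "vnorm v (\<lambda>z. cesaro t f z - cesaro t g z)
    \<le> cesaro_norm_bound t * vnorm v (\<lambda>z. f z - g z)"
proof (rule vnorm_le)
  fix z :: complex assume z: "z \<in> ball 0 1"
  have "cesaro t f z - cesaro t g z = cesaro t (\<lambda>z. f z - g z) z"
    using assms z by (intro cesaro_diff[symmetric]) (auto simp: Hv_def)
  then show "norm (cesaro t f z - cesaro t g z) * v (norm z)
      \<le> cesaro_norm_bound t * vnorm v (\<lambda>z. f z - g z)"
    using norm_cesaro_mult_weight_le[OF assms(1) Hv_diff[OF assms(1-3)] assms(4,5) z] by simp
qed

lemma cesaro_continuous:
  assumes "is_weight v" "f \<in> Hv v" "0 \<le> t" "t < 1" "e > 0"
  shows "\<exists>d>0. \<forall>g\<in>Hv v. vnorm v (\<lambda>z. g z - f z) < d \<longrightarrow>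
           vnorm v (\<lambda>z. cesaro t g z - cesaro t f z) < e"
proof (intro exI conjI ballI impI)
  let ?L = "cesaro_norm_bound t"
  have L: "?L > 0"
    using assms(4) by (rule cesaro_norm_bound_pos)
  then show "e / ?L > 0"
    using assms(5) by simp
  fix g assume g: "g \<in> Hv v" and close: "vnorm v (\<lambda>z. g z - f z) < e / ?L"
  have "vnorm v (\<lambda>z. cesaro t g z - cesaro t f z) \<le> ?L * vnorm v (\<lambda>z. g z - f z)"
    using assms(1) g assms(2-4) by (rule vnorm_cesaro_diff_le)
  also have "\<dots> < ?L * (e / ?L)"
    using close L by (rule mult_strict_left_mono)
  finally show "vnorm v (\<lambda>z. cesaro t g z - cesaro t f z) < e"
    using L by simp
qed

lemma opnorm_cesaro_le:
  assumes "is_weight v" "0 \<le> t" "t < 1"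
  shows "opnorm_v v (cesaro t) \<le> cesaro_norm_bound t"
  using assms cesaro_norm_bound_pos[OF assms(3)] vnorm_cesaro_le
  by (intro opnorm_v_le) auto

lemma one_le_opnorm_cesaro:
  assumes "is_weight v" "0 \<le> t" "t < 1"
  shows "1 \<le> opnorm_v v (cesaro t)"
  using assms cesaro_norm_bound_pos[OF assms(3)] vnorm_cesaro_le cesaro_Hv
  by (intro one_le_opnorm_v[where C = "cesaro_norm_bound t"]) (auto simp: cesaro_def)

theorem proposition2p4:
  fixes v :: "real \<Rightarrow> real"
  assumes "is_weight v"
  shows "(\<forall>t\<in>{0..<1}.
            (\<forall>f\<in>Hv v. cesaro t f \<in> Hv v) \<and>
            (\<forall>f\<in>Hv v. \<forall>e>0. \<exists>d>0. \<forall>g\<in>Hv v.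
                vnorm v (\<lambda>z. g z - f z) < d \<longrightarrow>
                vnorm v (\<lambda>z. cesaro t g z - cesaro t f z) < e))
       \<and> opnorm_v v (cesaro 0) = 1
       \<and> (\<forall>t\<in>{0<..<1}. 1 \<le> opnorm_v v (cesaro t) \<and>
                          opnorm_v v (cesaro t) \<le> - ln (1 - t) / t)"
proof (intro conjI ballI allI impI)
  fix t :: real and f assume "t \<in> {0..<1}" "f \<in> Hv v"
  then show "cesaro t f \<in> Hv v"
    using cesaro_Hv[OF assms] by simp
next
  fix t e :: real and f assume "t \<in> {0..<1}" "f \<in> Hv v" "e > 0"
  then show "\<exists>d>0. \<forall>g\<in>Hv v. vnorm v (\<lambda>z. g z - f z) < d \<longrightarrow>
      vnorm v (\<lambda>z. cesaro t g z - cesaro t f z) < e"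
    using cesaro_continuous[OF assms] by simp
next
  show "opnorm_v v (cesaro 0) = 1"
    using opnorm_cesaro_le[OF assms, of 0] one_le_opnorm_cesaro[OF assms, of 0]
    by (simp add: cesaro_norm_bound_def)
next
  fix t :: real assume t: "t \<in> {0<..<1}"
  then show "1 \<le> opnorm_v v (cesaro t)"
    using one_le_opnorm_cesaro[OF assms] by simp
  show "opnorm_v v (cesaro t) \<le> - ln (1 - t) / t"
    using t opnorm_cesaro_le[OF assms, of t] by (simp add: cesaro_norm_bound_def)
qed

end
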